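(* For any $s\in\mathbb{R}$ and all $f\in H^s(\mathbb{R})$, $g\in H^{s-1}(\mathbb{R})$, \begin{align*} \|\eta(t)W_R^t(f,g)\|_{L^\infty_xH_t^{\frac{2s+1}{4}}}&\lesssim\|f\|_{H^s_x}+\|g\|_{H^{s-1}_x},\\ \|\eta(t)\,\partial_x[W_R^t(f,g)]\|_{L^\infty_xH_t^{\frac{2s-1}{4}}}&\lesssim\|f\|_{H^s_x}+\|g\|_{H^{s-1}_x}, \end{align*} with implicit constants independent of $f,g$.
   Context: $W_{R,1}^t$ and $W_{R,2}^t$ are the spatial Fourier multiplier operators with symbols $\operatorname{Re}e^{it\sqrt{\xi^2+\xi^4}}$ and $\operatorname{Im}e^{it\sqrt{\xi^2+\xi^4}}(\xi^2+\xi^4)^{-1/2}$ respectively, and $W_R^t(f,g)=W_{R,1}^tf+W_{R,2}^tg_x$ (the solution on $\mathbb{R}$ of $w_{tt}-w_{xx}+w_{xxxx}=0$ with $w(x,0)=f$, $w_t(x,0)=g_x$). $\eta\in C^\infty(\mathbb{R})$ satisfies $\eta=1$ on $[-1,1]$ and $\operatorname{supp}\eta\subset[-2,2]$. $a\lesssim b$ means $a\le Cb$ for an absolute constant $C$. *)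

theory Defs
  imports "HOL-Analysis.Analysis"
begin

text \<open>Fourier transform: hat f xi = integral of f x * exp(-i x xi) dx,
  inverse: f x = (1/(2 pi)) integral of exp(i x xi) * hat f xi dxi.
  A (tempered) distribution f in H^s(R) is represented by its Fourier transform
  fh :: real => complex, a Borel function with
  norm_H^s f = ( integral (1+xi^2)^s |fh xi|^2 dxi )^(1/2) finite.\<close>

definition smooth_real :: "(real \<Rightarrow> real) \<Rightarrow> bool" where
  "smooth_real h \<longleftrightarrow> (\<forall>n x. (deriv ^^ n) h differentiable (at x))"

definition is_cutoff :: "(real \<Rightarrow> real) \<Rightarrow> bool" where
  "is_cutoff \<eta> \<longleftrightarrow> smooth_real \<eta> \<and> (\<forall>t\<in>{-1..1}. \<eta> t = 1)
      \<and> (\<forall>t. \<eta> t \<noteq> 0 \<longrightarrow> t \<in> {-2..2})"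

definition Hs_sq :: "real \<Rightarrow> (real \<Rightarrow> complex) \<Rightarrow> ennreal" where
  "Hs_sq s fh = (\<integral>\<^sup>+ \<xi>. ennreal ((1 + \<xi>\<^sup>2) powr s * (cmod (fh \<xi>))\<^sup>2) \<partial>lborel)"

definition in_Hs :: "real \<Rightarrow> (real \<Rightarrow> complex) \<Rightarrow> bool" where
  "in_Hs s fh \<longleftrightarrow> fh \<in> borel_measurable lborel \<and> Hs_sq s fh < \<infinity>"

definition Hs_norm :: "real \<Rightarrow> (real \<Rightarrow> complex) \<Rightarrow> real" where
  "Hs_norm s fh = sqrt (enn2real (Hs_sq s fh))"

definition omega :: "real \<Rightarrow> real" where
  "omega \<xi> = sqrt (\<xi>\<^sup>2 + \<xi>^4)"

definition sym1 :: "real \<Rightarrow> real \<Rightarrow> real" where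
  "sym1 t \<xi> = Re (exp (\<i> * complex_of_real (t * omega \<xi>)))"

definition sym2 :: "real \<Rightarrow> real \<Rightarrow> real" where
  "sym2 t \<xi> = Im (exp (\<i> * complex_of_real (t * omega \<xi>))) * (\<xi>\<^sup>2 + \<xi>^4) powr (-1/2)"

text \<open>Spatial Fourier transform of W_R^t(f,g) = W_{R,1}^t f + W_{R,2}^t g_x at frequency xi.\<close>
definition WR_hat :: "(real \<Rightarrow> complex) \<Rightarrow> (real \<Rightarrow> complex) \<Rightarrow> real \<Rightarrow> real \<Rightarrow> complex" where
  "WR_hat fh gh t \<xi> = complex_of_real (sym1 t \<xi>) * fh \<xi>
      + complex_of_real (sym2 t \<xi>) * (\<i> * complex_of_real \<xi> * gh \<xi>)"

text \<open>Temporal Fourier transform (variable tau) of the function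
  t |-> eta(t) * (inverse spatial Fourier transform of (mlt xi) * WR_hat fh gh t xi)(x),
  with the t-integral taken inside the xi-integral (Fubini).  mlt = 1 gives eta W_R^t(f,g),
  mlt xi = i xi gives eta d_x W_R^t(f,g).\<close>
definition time_FT :: "(real \<Rightarrow> real) \<Rightarrow> (real \<Rightarrow> complex) \<Rightarrow> (real \<Rightarrow> complex)
      \<Rightarrow> (real \<Rightarrow> complex) \<Rightarrow> real \<Rightarrow> real \<Rightarrow> complex" where
  "time_FT \<eta> mlt fh gh x \<tau> =
     complex_of_real (1 / (2 * pi)) *
     (\<integral>\<xi>. exp (\<i> * complex_of_real (x * \<xi>)) * mlt \<xi> *
        (\<integral>t. complex_of_real (\<eta> t) * WR_hat fh gh t \<xi> * exp (- \<i> * complex_of_real (t * \<tau>)) \<partial>lborel)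
      \<partial>lborel)"

definition time_Hs_sq :: "real \<Rightarrow> (real \<Rightarrow> real) \<Rightarrow> (real \<Rightarrow> complex) \<Rightarrow> (real \<Rightarrow> complex)
      \<Rightarrow> (real \<Rightarrow> complex) \<Rightarrow> real \<Rightarrow> ennreal" where
  "time_Hs_sq r \<eta> mlt fh gh x =
     (\<integral>\<^sup>+ \<tau>. ennreal ((1 + \<tau>\<^sup>2) powr r * (cmod (time_FT \<eta> mlt fh gh x \<tau>))\<^sup>2) \<partial>lborel)"

end

theory Submission
  imports Defs
begin

text \<open>
  Expanding \<open>cos (t \<omega>)\<close> and \<open>sin (t \<omega>)\<close> into exponentials, the time Fourier transform of
  \<open>\<eta>(t)\<close> times the \<open>\<xi>\<close>-mode of \<open>W\<^sub>R\<^sup>t(f,g)\<close> is a combination of \<open>\<eta>\<^sup>\<and>(\<tau> - \<omega>(\<xi>))\<close> and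
  \<open>\<eta>\<^sup>\<and>(\<tau> + \<omega>(\<xi>))\<close> with coefficients bounded by \<open>a(\<xi>) = |f\<^sup>\<and>(\<xi>)| + |g\<^sup>\<and>(\<xi>)| / \<langle>\<xi>\<rangle>\<close>.
  As \<open>\<eta>\<^sup>\<and>\<close> decays faster than any power, the time transform at a point \<open>x\<close> (which only enters
  through a unimodular factor) is dominated by the \<open>\<xi>\<close>-integral of \<open>|m(\<xi>)| a(\<xi>)\<close> against the
  kernel \<open>\<langle>\<tau> - \<omega>\<rangle>\<^sup>-\<^sup>2\<^sup>N + \<langle>\<tau> + \<omega>\<rangle>\<^sup>-\<^sup>2\<^sup>N\<close>. Cauchy-Schwarz with weight \<open>\<langle>\<xi>\<rangle>\<close>, together with the
  substitution \<open>\<xi> \<mapsto> \<xi>\<langle>\<xi>\<rangle>\<close> whose derivative dominates \<open>\<langle>\<xi>\<rangle>\<close>, bounds the square of this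
  integral; integrating over \<open>\<tau>\<close> with Peetre's inequality leaves the weight
  \<open>|m(\<xi>)|\<^sup>2 \<langle>\<xi>\<rangle>\<^sup>4\<^sup>r\<^sup>-\<^sup>1 a(\<xi>)\<^sup>2\<close>, which is \<open>\<langle>\<xi>\<rangle>\<^sup>2\<^sup>s a(\<xi>)\<^sup>2\<close> for \<open>r = (2s+1)/4, m = 1\<close> and for
  \<open>r = (2s-1)/4, m = i\<xi>\<close>.
\<close>

section \<open>Fourier transform of compactly supported functions\<close>

definition fourier :: "(real \<Rightarrow> real) \<Rightarrow> real \<Rightarrow> complex" where
  "fourier h \<sigma> = (\<integral>t. complex_of_real (h t) * exp (- \<i> * complex_of_real (t * \<sigma>)) \<partial>lborel)"

lemma
  assumes h: "continuous_on UNIV h" and supp: "\<And>t. R < \<bar>t\<bar> \<Longrightarrow> h t = 0" and "R \<le> a"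
  shows integrable_fourier_integrand:
      "integrable lborel (\<lambda>t. complex_of_real (h t) * exp (- \<i> * complex_of_real (t * \<sigma>)))"
    and fourier_eq_integral_interval:
      "fourier h \<sigma> = integral {-a..a} (\<lambda>t. complex_of_real (h t) * exp (- \<i> * complex_of_real (t * \<sigma>)))"
proof -
  let ?f = "\<lambda>t. complex_of_real (h t) * exp (- \<i> * complex_of_real (t * \<sigma>))"
  have outside: "(\<lambda>t. if t \<in> {-a..a} then ?f t else 0) = ?f"
    using \<open>R \<le> a\<close> supp by fastforce
  have cont: "continuous_on {-a..a} ?f"
    by (intro continuous_intros continuous_on_subset[OF h]) auto
  have "(\<lambda>t. indicator {-a..a} t *\<^sub>R ?f t) = ?f"
    using \<open>R \<le> a\<close> supp by (force simp: indicator_def)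
  with borel_integrable_compact[OF compact_Icc cont] show I: "integrable lborel ?f"
    by simp
  have "integral UNIV ?f = fourier h \<sigma>"
    using has_integral_integral_lborel[OF I] unfolding fourier_def by blast
  then show "fourier h \<sigma> = integral {-a..a} ?f"
    using integral_restrict_UNIV[of "{-a..a}" ?f, unfolded outside] by simp
qed

lemma derivative_vanishes_outside:
  assumes d: "(h has_real_derivative h') (at t)"
    and supp: "\<And>t. R < \<bar>t\<bar> \<Longrightarrow> h t = 0" and t: "R < \<bar>t\<bar>"
  shows "h' = 0"
proof -
  have "(h has_real_derivative 0) (at t)"
    by (rule has_field_derivative_transform_within_open[of "\<lambda>_. 0" 0 t "{t. R < \<bar>t\<bar>}"])
      (use supp t in \<open>auto intro!: open_Collect_less continuous_intros\<close>)
  with d show ?thesis by (rule DERIV_unique)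
qed

lemma has_vector_derivative_fourier_integrand:
  assumes "(h has_real_derivative h') (at t)"
  shows "((\<lambda>t. complex_of_real (h t) * exp (- \<i> * complex_of_real (t * \<sigma>))) has_vector_derivative
      complex_of_real h' * exp (- \<i> * complex_of_real (t * \<sigma>))
        - \<i> * complex_of_real \<sigma> * (complex_of_real (h t) * exp (- \<i> * complex_of_real (t * \<sigma>)))) (at t within S)"
proof -
  have "((\<lambda>z. exp (- \<i> * (z * complex_of_real \<sigma>))) has_field_derivative
      (- \<i> * complex_of_real \<sigma> * exp (- \<i> * (complex_of_real t * complex_of_real \<sigma>)))) (at (of_real t))"
    by (rule derivative_eq_intros refl)+ (simp add: algebra_simps)
  from has_vector_derivative_real_field[OF this]
  have "((\<lambda>t. exp (- \<i> * complex_of_real (t * \<sigma>))) has_vector_derivative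
      - \<i> * complex_of_real \<sigma> * exp (- \<i> * complex_of_real (t * \<sigma>))) (at t within S)"
    by (simp add: has_vector_derivative_at_within)
  moreover have "((\<lambda>t. complex_of_real (h t)) has_vector_derivative complex_of_real h') (at t within S)"
    by (rule has_vector_derivative_of_real, rule has_field_derivative_at_within, rule assms)
  ultimately show ?thesis
    using has_vector_derivative_mult[rotated] by (fastforce simp: algebra_simps)
qed

lemma fourier_deriv:
  assumes d: "\<And>t. (h has_real_derivative h' t) (at t)" and c': "continuous_on UNIV h'"
    and supp: "\<And>t. R < \<bar>t\<bar> \<Longrightarrow> h t = 0"
  shows "fourier h' \<sigma> = \<i> * complex_of_real \<sigma> * fourier h \<sigma>"
proof -
  define a where "a = \<bar>R\<bar> + 1"
  have "R \<le> a" unfolding a_def by simp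
  have c: "continuous_on UNIV h"
    using d by (meson DERIV_isCont continuous_at_imp_continuous_on)
  have supp': "h' t = 0" if "R < \<bar>t\<bar>" for t
    using derivative_vanishes_outside[OF d supp that] .
  let ?F = "\<lambda>t. complex_of_real (h t) * exp (- \<i> * complex_of_real (t * \<sigma>))"
  let ?F' = "\<lambda>t. complex_of_real (h' t) * exp (- \<i> * complex_of_real (t * \<sigma>))"
  have "?F a = 0" "?F (-a) = 0"
    using supp[of a] supp[of "-a"] unfolding a_def by auto
  moreover have "((\<lambda>t. ?F' t - \<i> * complex_of_real \<sigma> * ?F t) has_integral ?F a - ?F (-a)) {-a..a}"
    by (rule fundamental_theorem_of_calculus)
      (use a_def has_vector_derivative_fourier_integrand[OF d] in simp_all)
  ultimately have I0: "((\<lambda>t. ?F' t - \<i> * complex_of_real \<sigma> * ?F t) has_integral 0) {-a..a}"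
    by simp
  have "((\<lambda>t. ?F' t - \<i> * complex_of_real \<sigma> * ?F t) has_integral
      integral {-a..a} ?F' - \<i> * complex_of_real \<sigma> * integral {-a..a} ?F) {-a..a}"
    by (intro has_integral_diff has_integral_mult_right integrable_integral integrable_continuous_interval
        continuous_intros continuous_on_subset[OF c'] continuous_on_subset[OF c]) auto
  from has_integral_unique[OF this I0]
  have "integral {-a..a} ?F' = \<i> * complex_of_real \<sigma> * integral {-a..a} ?F"
    by simp
  then show ?thesis
    using fourier_eq_integral_interval[OF c' supp' \<open>R \<le> a\<close>] fourier_eq_integral_interval[OF c supp \<open>R \<le> a\<close>]
    by simp
qed

lemma smooth_real_iterated_deriv:
  assumes "smooth_real \<eta>"
  shows "((deriv ^^ k) \<eta> has_real_derivative (deriv ^^ Suc k) \<eta> t) (at t)"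
  using assms unfolding smooth_real_def by (simp add: DERIV_deriv_iff_real_differentiable)

lemma smooth_real_continuous_iterated_deriv:
  assumes "smooth_real \<eta>"
  shows "continuous_on UNIV ((deriv ^^ k) \<eta>)"
  using smooth_real_iterated_deriv[OF assms]
  by (meson DERIV_isCont continuous_at_imp_continuous_on)

lemma iterated_deriv_vanishes_outside:
  assumes "smooth_real \<eta>" and supp: "\<And>t. R < \<bar>t\<bar> \<Longrightarrow> \<eta> t = 0"
  shows "R < \<bar>t\<bar> \<Longrightarrow> (deriv ^^ k) \<eta> t = 0"
proof (induction k arbitrary: t)
  case (Suc k)
  show ?case
    using derivative_vanishes_outside[OF smooth_real_iterated_deriv[OF assms(1)] Suc.IH Suc.prems] .
qed (use supp in simp)

lemma fourier_iterated_deriv: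
  assumes "smooth_real \<eta>" and "\<And>t. R < \<bar>t\<bar> \<Longrightarrow> \<eta> t = 0"
  shows "fourier ((deriv ^^ k) \<eta>) \<sigma> = (\<i> * complex_of_real \<sigma>) ^ k * fourier \<eta> \<sigma>"
proof (induction k)
  case (Suc k)
  have "fourier ((deriv ^^ Suc k) \<eta>) \<sigma> = \<i> * complex_of_real \<sigma> * fourier ((deriv ^^ k) \<eta>) \<sigma>"
    by (rule fourier_deriv[OF smooth_real_iterated_deriv[OF assms(1)]
          smooth_real_continuous_iterated_deriv[OF assms(1)] iterated_deriv_vanishes_outside[OF assms]])
  with Suc show ?case by simp
qed simp

lemma norm_fourier_le: "cmod (fourier h \<sigma>) \<le> (\<integral>t. \<bar>h t\<bar> \<partial>lborel)"
proof -
  have "cmod (fourier h \<sigma>) \<le> (\<integral>t. cmod (complex_of_real (h t) * exp (- \<i> * complex_of_real (t * \<sigma>))) \<partial>lborel)"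
    unfolding fourier_def by (rule integral_norm_bound)
  then show ?thesis by (simp add: norm_mult)
qed

lemma one_plus_power_le: "(1 + x) ^ N \<le> 2 ^ N * (1 + x ^ N)" if "(x::real) \<ge> 0"
proof -
  have "(1 + x) ^ N \<le> (2 * max 1 x) ^ N"
    using that by (intro power_mono) auto
  also have "\<dots> \<le> 2 ^ N * (1 + x ^ N)"
    using that by (auto simp: power_mult_distrib max_def)
  finally show ?thesis .
qed

definition lorentz :: "real \<Rightarrow> real" where
  "lorentz y = 1 / (1 + y\<^sup>2)"

lemma fourier_rapid_decay:
  assumes "smooth_real \<eta>" and "\<And>t. R < \<bar>t\<bar> \<Longrightarrow> \<eta> t = 0"
  obtains C where "C \<ge> 0" and "\<And>\<sigma>. cmod (fourier \<eta> \<sigma>) \<le> C * lorentz \<sigma> ^ N"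
proof -
  define M where "M k = (\<integral>t. \<bar>(deriv ^^ k) \<eta> t\<bar> \<partial>lborel)" for k
  have M: "cmod (fourier \<eta> \<sigma>) * \<bar>\<sigma>\<bar> ^ k \<le> M k" for k \<sigma>
    using norm_fourier_le[of "(deriv ^^ k) \<eta>" \<sigma>]
    by (simp add: M_def fourier_iterated_deriv[OF assms] norm_mult norm_power mult.commute)
  define C where "C = 2 ^ N * (M 0 + M (2 * N))"
  have "C \<ge> 0" unfolding C_def M_def by simp
  moreover have "cmod (fourier \<eta> \<sigma>) \<le> C * lorentz \<sigma> ^ N" for \<sigma>
  proof -
    have "cmod (fourier \<eta> \<sigma>) * (1 + \<sigma>\<^sup>2) ^ N \<le> cmod (fourier \<eta> \<sigma>) * (2 ^ N * (1 + \<bar>\<sigma>\<bar> ^ (2 * N)))"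
      by (intro mult_left_mono) (auto simp: power_mult one_plus_power_le)
    also have "\<dots> = 2 ^ N * (cmod (fourier \<eta> \<sigma>) * \<bar>\<sigma>\<bar> ^ 0 + cmod (fourier \<eta> \<sigma>) * \<bar>\<sigma>\<bar> ^ (2 * N))"
      by (simp add: algebra_simps)
    also have "\<dots> \<le> C"
      unfolding C_def by (intro mult_left_mono add_mono M) auto
    moreover have "(1 + \<sigma>\<^sup>2) ^ N > 0"
      by (simp add: add_pos_nonneg)
    ultimately show ?thesis
      by (simp add: lorentz_def power_one_over mult.commute pos_le_divide_eq)
  qed
  ultimately show thesis by (rule that)
qed

section \<open>Splitting the solution into two waves\<close>

definition bracket :: "real \<Rightarrow> real" where
  "bracket \<xi> = sqrt (1 + \<xi>\<^sup>2)"

text \<open>A signed square root of \<open>\<xi>\<^sup>2 + \<xi>\<^sup>4\<close>; unlike \<open>omega\<close> it is smooth and strictly increasing,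
  so it can serve as a change of variables.\<close>
definition disp :: "real \<Rightarrow> real" where
  "disp \<xi> = \<xi> * bracket \<xi>"

definition amp :: "(real \<Rightarrow> complex) \<Rightarrow> (real \<Rightarrow> complex) \<Rightarrow> real \<Rightarrow> real" where
  "amp fh gh \<xi> = cmod (fh \<xi>) + cmod (gh \<xi>) / bracket \<xi>"

lemma bracket_pos: "0 < bracket \<xi>"
  unfolding bracket_def by (simp add: add_pos_nonneg)

lemma bracket_sq: "(bracket \<xi>)\<^sup>2 = 1 + \<xi>\<^sup>2"
  unfolding bracket_def by (simp add: add_nonneg_nonneg)

lemma amp_nonneg: "0 \<le> amp fh gh \<xi>"
  unfolding amp_def using bracket_pos[of \<xi>] by simp

lemma borel_measurable_amp [measurable]:
  assumes [measurable]: "fh \<in> borel_measurable lborel" "gh \<in> borel_measurable lborel"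
  shows "amp fh gh \<in> borel_measurable lborel"
  unfolding amp_def bracket_def by measurable

lemma omega_eq_abs_disp: "omega \<xi> = \<bar>disp \<xi>\<bar>"
proof -
  have "\<xi>\<^sup>2 + \<xi> ^ 4 = \<xi>\<^sup>2 * (1 + \<xi>\<^sup>2)"
    by (simp add: algebra_simps power2_eq_square power4_eq_xxxx)
  then show ?thesis
    unfolding omega_def disp_def bracket_def by (simp add: real_sqrt_mult abs_mult)
qed

lemma abs_mult_omega_inverse_le: "\<bar>\<xi> * (\<xi>\<^sup>2 + \<xi> ^ 4) powr (-1/2)\<bar> \<le> 1 / bracket \<xi>"
proof (cases "\<xi> = 0")
  case False
  then have "0 < \<xi>\<^sup>2 + \<xi> ^ 4"
    by (simp add: add_pos_nonneg)
  then have "(\<xi>\<^sup>2 + \<xi> ^ 4) powr (-1/2) = 1 / omega \<xi>"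
    unfolding omega_def by (simp add: powr_minus_divide powr_half_sqrt[symmetric])
  with False show ?thesis
    by (simp add: omega_eq_abs_disp disp_def abs_mult abs_of_pos[OF bracket_pos])
qed (simp add: bracket_pos less_imp_le)

lemma cos_sin_mult_exp:
  fixes a b :: complex
  shows "(complex_of_real (cos (t * w)) * a + complex_of_real (sin (t * w)) * b) * exp (- \<i> * complex_of_real (t * \<tau>))
    = (a / 2 + b / (2 * \<i>)) * exp (- \<i> * complex_of_real (t * (\<tau> - w)))
      + (a / 2 - b / (2 * \<i>)) * exp (- \<i> * complex_of_real (t * (\<tau> + w)))"
proof -
  let ?E = "exp (- \<i> * complex_of_real (t * \<tau>))" and ?z = "\<i> * complex_of_real (t * w)"
  have "exp (- \<i> * complex_of_real (t * (\<tau> - w))) = exp ?z * ?E"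
    and "exp (- \<i> * complex_of_real (t * (\<tau> + w))) = exp (- ?z) * ?E"
    by (simp_all add: exp_add[symmetric] algebra_simps)
  moreover have "complex_of_real (cos (t * w)) = (exp ?z + exp (- ?z)) / 2"
    and "complex_of_real (sin (t * w)) = (exp ?z - exp (- ?z)) / (2 * \<i>)"
    by (simp_all add: cos_of_real[symmetric] sin_of_real[symmetric] cos_exp_eq sin_exp_eq)
  ultimately show ?thesis
    by (simp only:) (simp add: field_simps)
qed

lemma time_integral_WR_hat:
  assumes c: "continuous_on UNIV \<eta>" and supp: "\<And>t. R < \<bar>t\<bar> \<Longrightarrow> \<eta> t = 0"
  obtains \<alpha> \<beta> where "cmod \<alpha> \<le> amp fh gh \<xi>" and "cmod \<beta> \<le> amp fh gh \<xi>"
    and "(\<integral>t. complex_of_real (\<eta> t) * WR_hat fh gh t \<xi> * exp (- \<i> * complex_of_real (t * \<tau>)) \<partial>lborel)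
        = \<alpha> * fourier \<eta> (\<tau> - omega \<xi>) + \<beta> * fourier \<eta> (\<tau> + omega \<xi>)"
proof -
  define w where "w = omega \<xi>"
  define c where "c = complex_of_real ((\<xi>\<^sup>2 + \<xi> ^ 4) powr (-1/2)) * (\<i> * complex_of_real \<xi> * gh \<xi>)"
  define \<alpha> where "\<alpha> = fh \<xi> / 2 + c / (2 * \<i>)"
  define \<beta> where "\<beta> = fh \<xi> / 2 - c / (2 * \<i>)"
  define g where "g \<sigma> t = complex_of_real (\<eta> t) * exp (- \<i> * complex_of_real (t * \<sigma>))" for \<sigma> t
  have split: "complex_of_real (\<eta> t) * WR_hat fh gh t \<xi> * exp (- \<i> * complex_of_real (t * \<tau>))
      = \<alpha> * g (\<tau> - w) t + \<beta> * g (\<tau> + w) t" for t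
  proof -
    have "WR_hat fh gh t \<xi> = complex_of_real (cos (t * w)) * fh \<xi> + complex_of_real (sin (t * w)) * c"
      unfolding WR_hat_def sym1_def sym2_def w_def c_def by (simp add: Re_exp Im_exp mult_ac)
    then have "complex_of_real (\<eta> t) * WR_hat fh gh t \<xi> * exp (- \<i> * complex_of_real (t * \<tau>))
        = complex_of_real (\<eta> t) * (\<alpha> * exp (- \<i> * complex_of_real (t * (\<tau> - w)))
            + \<beta> * exp (- \<i> * complex_of_real (t * (\<tau> + w))))"
      unfolding \<alpha>_def \<beta>_def by (simp only: mult.assoc cos_sin_mult_exp)
    then show ?thesis
      unfolding g_def by (simp add: algebra_simps)
  qed
  have "cmod c \<le> cmod (gh \<xi>) / bracket \<xi>"
    using mult_right_mono[OF abs_mult_omega_inverse_le, of "cmod (gh \<xi>)" \<xi>]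
    by (simp add: c_def norm_mult abs_mult mult_ac)
  then have "cmod \<alpha> \<le> amp fh gh \<xi> \<and> cmod \<beta> \<le> amp fh gh \<xi>"
    using norm_triangle_ineq[of "fh \<xi> / 2" "c / (2 * \<i>)"] norm_triangle_ineq4[of "fh \<xi> / 2" "c / (2 * \<i>)"]
    unfolding \<alpha>_def \<beta>_def amp_def
    by (simp add: norm_divide norm_mult) (use norm_ge_zero[of "fh \<xi>"] norm_ge_zero[of c] in linarith)
  moreover have "integrable lborel (g \<sigma>)" for \<sigma>
    unfolding g_def by (rule integrable_fourier_integrand[OF c supp order_refl])
  then have "(\<integral>t. complex_of_real (\<eta> t) * WR_hat fh gh t \<xi> * exp (- \<i> * complex_of_real (t * \<tau>)) \<partial>lborel)
      = \<alpha> * fourier \<eta> (\<tau> - w) + \<beta> * fourier \<eta> (\<tau> + w)"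
    unfolding split fourier_def g_def[symmetric] by simp
  ultimately show thesis
    using that unfolding w_def by blast
qed

lemma norm_time_integral_WR_hat_le:
  assumes "continuous_on UNIV \<eta>" and "\<And>t. R < \<bar>t\<bar> \<Longrightarrow> \<eta> t = 0"
  shows "cmod (\<integral>t. complex_of_real (\<eta> t) * WR_hat fh gh t \<xi> * exp (- \<i> * complex_of_real (t * \<tau>)) \<partial>lborel)
    \<le> amp fh gh \<xi> * (cmod (fourier \<eta> (\<tau> - disp \<xi>)) + cmod (fourier \<eta> (\<tau> + disp \<xi>)))"
proof -
  obtain \<alpha> \<beta> where \<alpha>: "cmod \<alpha> \<le> amp fh gh \<xi>" and \<beta>: "cmod \<beta> \<le> amp fh gh \<xi>"
    and eq: "(\<integral>t. complex_of_real (\<eta> t) * WR_hat fh gh t \<xi> * exp (- \<i> * complex_of_real (t * \<tau>)) \<partial>lborel)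
        = \<alpha> * fourier \<eta> (\<tau> - omega \<xi>) + \<beta> * fourier \<eta> (\<tau> + omega \<xi>)"
    using time_integral_WR_hat[OF assms] .
  have "cmod (\<alpha> * fourier \<eta> (\<tau> - omega \<xi>) + \<beta> * fourier \<eta> (\<tau> + omega \<xi>))
      \<le> cmod \<alpha> * cmod (fourier \<eta> (\<tau> - omega \<xi>)) + cmod \<beta> * cmod (fourier \<eta> (\<tau> + omega \<xi>))"
    by (rule order_trans[OF norm_triangle_ineq]) (simp add: norm_mult)
  also have "\<dots> \<le> amp fh gh \<xi> * (cmod (fourier \<eta> (\<tau> - omega \<xi>)) + cmod (fourier \<eta> (\<tau> + omega \<xi>)))"
    using \<alpha> \<beta> by (simp add: distrib_left add_mono mult_right_mono)
  also have "cmod (fourier \<eta> (\<tau> - omega \<xi>)) + cmod (fourier \<eta> (\<tau> + omega \<xi>))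
      = cmod (fourier \<eta> (\<tau> - disp \<xi>)) + cmod (fourier \<eta> (\<tau> + disp \<xi>))"
    by (cases "0 \<le> disp \<xi>") (simp_all add: omega_eq_abs_disp)
  finally show ?thesis
    unfolding eq .
qed

section \<open>Lorentzian integrals and Peetre's inequality\<close>

lemma lorentz_pos: "0 < lorentz y"
  unfolding lorentz_def by (simp add: add_pos_nonneg)

lemma lorentz_le_one: "lorentz y \<le> 1"
  unfolding lorentz_def by (simp add: divide_le_eq_1 add_pos_nonneg)

lemma lorentz_minus: "lorentz (- y) = lorentz y"
  unfolding lorentz_def by simp

lemma continuous_on_lorentz: "continuous_on UNIV lorentz"
  unfolding lorentz_def by (intro continuous_intros) (auto simp: add_nonneg_eq_0_iff)

lemma bracket_ge_one: "1 \<le> bracket \<xi>"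
  unfolding bracket_def by simp

lemma continuous_on_bracket: "continuous_on UNIV bracket"
  unfolding bracket_def by (intro continuous_intros)

lemma continuous_on_disp: "continuous_on UNIV disp"
  unfolding disp_def by (intro continuous_intros continuous_on_bracket)

lemma borel_measurable_lorentz [measurable]: "lorentz \<in> borel_measurable borel"
  by (rule borel_measurable_continuous_onI[OF continuous_on_lorentz])

lemma borel_measurable_bracket [measurable]: "bracket \<in> borel_measurable borel"
  by (rule borel_measurable_continuous_onI[OF continuous_on_bracket])

lemma borel_measurable_disp [measurable]: "disp \<in> borel_measurable borel"
  by (rule borel_measurable_continuous_onI[OF continuous_on_disp])

lemma nn_integral_lorentz_comp:
  fixes g g' :: "real \<Rightarrow> real"
  assumes d: "\<And>x. (g has_real_derivative g' x) (at x)" and c: "continuous_on UNIV g'"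
    and nn: "\<And>x. 0 \<le> g' x"
    and top: "filterlim g at_top at_top" and bot: "filterlim g at_bot at_bot"
  shows "(\<integral>\<^sup>+x. ennreal (lorentz (g x - c) * g' x) \<partial>lborel) = ennreal pi"
proof -
  let ?f = "\<lambda>x. lorentz (g x - c) * g' x"
  let ?F = "\<lambda>x. arctan (g x - c)"
  have gc: "continuous_on UNIV g"
    using d by (meson DERIV_isCont continuous_at_imp_continuous_on)
  have D: "(?F has_real_derivative ?f x) (at x)" for x
    by (auto intro!: derivative_eq_intros d simp: lorentz_def field_simps)
  have C: "isCont ?f x" for x
    using continuous_on_compose2[OF continuous_on_lorentz, of UNIV "\<lambda>x. g x - c"] gc c
    by (auto intro!: continuous_intros simp: continuous_on_eq_continuous_at)
  have A: "((?F \<circ> real_of_ereal) \<longlongrightarrow> - (pi/2)) (at_right (-\<infinity>))"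
    unfolding ereal_tendsto_simps
    by (rule filterlim_compose[OF tendsto_arctan_at_bot])
      (use bot in \<open>simp add: filterlim_at_bot eventually_mono diff_le_eq\<close>)
  have B: "((?F \<circ> real_of_ereal) \<longlongrightarrow> pi/2) (at_left \<infinity>)"
    unfolding ereal_tendsto_simps
    by (rule filterlim_compose[OF tendsto_arctan_at_top])
      (use top in \<open>simp add: filterlim_at_top eventually_mono le_diff_eq\<close>)
  have nn2: "\<And>x. 0 \<le> ?f x"
    using nn lorentz_pos by (simp add: less_imp_le)
  have "set_integrable lborel (einterval (-\<infinity>) \<infinity>) ?f" "(LBINT x=-\<infinity>..\<infinity>. ?f x) = pi/2 - - (pi/2)"
    using interval_integral_FTC_nonneg[of "-\<infinity>" \<infinity> ?F ?f, OF _ D C _ A B] nn2 by auto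
  then have I: "integrable lborel ?f" "integral\<^sup>L lborel ?f = pi"
    by (simp_all add: set_integrable_def interval_lebesgue_integral_def set_lebesgue_integral_def)
  show ?thesis
    using nn_integral_eq_integral[OF I(1)] nn2 I(2) by simp
qed

lemma nn_integral_lorentz_shift: "(\<integral>\<^sup>+\<tau>. ennreal (lorentz (\<tau> - v)) \<partial>lborel) = ennreal pi"
  using nn_integral_lorentz_comp[of "\<lambda>x. x" "\<lambda>_. 1" v] by (simp add: filterlim_ident)

lemma disp_has_derivative: "(disp has_real_derivative bracket \<xi> + \<xi>\<^sup>2 / bracket \<xi>) (at \<xi>)"
proof -
  have "0 < 1 + \<xi>\<^sup>2"
    by (simp add: add_pos_nonneg)
  then show ?thesis
    unfolding disp_def bracket_def
    by (auto intro!: derivative_eq_intros simp: field_simps power2_eq_square)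
qed

lemma filterlim_disp_at_top: "filterlim disp at_top at_top"
proof (rule filterlim_at_top_mono[OF filterlim_ident])
  show "eventually (\<lambda>x. x \<le> disp x) at_top"
    using eventually_ge_at_top[of "0::real"]
    by eventually_elim (use bracket_ge_one in \<open>simp add: disp_def mult_le_cancel_left1\<close>)
qed

lemma filterlim_disp_at_bot: "filterlim disp at_bot at_bot"
proof (rule filterlim_at_bot_mono[OF filterlim_ident])
  show "eventually (\<lambda>x. disp x \<le> x) at_bot"
    using eventually_le_at_bot[of "0::real"]
    by eventually_elim (use bracket_ge_one in \<open>simp add: disp_def mult_le_cancel_left2\<close>)
qed

lemma nn_integral_lorentz_disp:
  "(\<integral>\<^sup>+\<xi>. ennreal (lorentz (disp \<xi> - c) * (bracket \<xi> + \<xi>\<^sup>2 / bracket \<xi>)) \<partial>lborel) = ennreal pi"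
  by (rule nn_integral_lorentz_comp[OF disp_has_derivative _ _ filterlim_disp_at_top filterlim_disp_at_bot])
    (auto intro!: continuous_intros continuous_on_bracket
      simp: less_imp_le[OF bracket_pos] order_less_imp_not_eq2[OF bracket_pos])

lemma one_plus_sq_le: "1 + x\<^sup>2 \<le> 2 * (1 + y\<^sup>2) * (1 + (x - y)\<^sup>2)" for x y :: real
proof -
  have "x\<^sup>2 \<le> 2 * y\<^sup>2 + 2 * (x - y)\<^sup>2"
    by (smt (verit) power2_diff power2_sum sum_squares_ge_zero zero_le_power2)
  moreover have "0 \<le> y\<^sup>2 * (x - y)\<^sup>2"
    by simp
  moreover have "2 * (1 + y\<^sup>2) * (1 + (x - y)\<^sup>2) = 2 + 2 * y\<^sup>2 + 2 * (x - y)\<^sup>2 + 2 * (y\<^sup>2 * (x - y)\<^sup>2)"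
    by (simp add: algebra_simps)
  ultimately show ?thesis
    by linarith
qed

lemma peetre:
  fixes \<tau> v r :: real
  shows "(1 + \<tau>\<^sup>2) powr r \<le> 2 powr \<bar>r\<bar> * (1 + v\<^sup>2) powr r * (1 + (\<tau> - v)\<^sup>2) powr \<bar>r\<bar>"
proof -
  define A B D where "A = 1 + \<tau>\<^sup>2" and "B = 1 + v\<^sup>2" and "D = 1 + (\<tau> - v)\<^sup>2"
  have pos: "1 \<le> A" "1 \<le> B" "1 \<le> D"
    by (simp_all add: A_def B_def D_def)
  show ?thesis
  proof (cases "0 \<le> r")
    case True
    have "A powr r \<le> (2 * B * D) powr r"
      using pos True one_plus_sq_le[of \<tau> v] unfolding A_def B_def D_def by (intro powr_mono2) auto
    also have "\<dots> = 2 powr \<bar>r\<bar> * B powr r * D powr \<bar>r\<bar>"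
      using True pos by (simp add: powr_mult)
    finally show ?thesis
      unfolding A_def B_def D_def .
  next
    case False
    have "B \<le> 2 * A * D"
      using one_plus_sq_le[of v \<tau>] unfolding A_def B_def D_def by (simp add: power2_commute)
    then have "B / (2 * D) \<le> A"
      using pos by (simp add: divide_le_eq mult_ac)
    then have "A powr r \<le> (B / (2 * D)) powr r"
      using False pos by (intro powr_mono2') auto
    also have "\<dots> = 2 powr \<bar>r\<bar> * B powr r * D powr \<bar>r\<bar>"
      using False pos by (simp add: powr_divide powr_minus_divide powr_mult)
    finally show ?thesis
      unfolding A_def B_def D_def .
  qed
qed

lemma peetre_lorentz:
  fixes \<tau> v r :: real
  assumes N: "1 + \<bar>r\<bar> \<le> real N"
  shows "(1 + \<tau>\<^sup>2) powr r * lorentz (\<tau> - v) ^ N \<le> 2 powr \<bar>r\<bar> * (1 + v\<^sup>2) powr r * lorentz (\<tau> - v)"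
proof -
  define D where "D = 1 + (\<tau> - v)\<^sup>2"
  have D: "1 \<le> D"
    unfolding D_def by simp
  have "lorentz (\<tau> - v) ^ N = 1 / D powr real N"
    by (simp add: lorentz_def D_def powr_realpow power_one_over add_pos_nonneg)
  also have "\<dots> = D powr (- real N)"
    by (simp add: powr_minus_divide)
  also have "\<dots> \<le> D powr (-1 - \<bar>r\<bar>)"
    using D N by (intro powr_mono) auto
  finally have "(1 + \<tau>\<^sup>2) powr r * lorentz (\<tau> - v) ^ N
      \<le> (2 powr \<bar>r\<bar> * (1 + v\<^sup>2) powr r * D powr \<bar>r\<bar>) * D powr (-1 - \<bar>r\<bar>)"
    using peetre[of \<tau> r v] lorentz_pos[of "\<tau> - v"] unfolding D_def[symmetric]
    by (intro mult_mono) auto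
  also have "\<dots> = 2 powr \<bar>r\<bar> * (1 + v\<^sup>2) powr r * D powr (-1)"
    by (simp add: mult.assoc powr_add[symmetric])
  finally show ?thesis
    using D by (simp add: lorentz_def D_def powr_minus_divide)
qed

section \<open>The kernel estimate\<close>

text \<open>Majorant of the time profile of the mode \<open>\<xi>\<close>, concentrated near \<open>\<tau> = \<plusminus>disp \<xi>\<close>.\<close>
definition kernel :: "real \<Rightarrow> nat \<Rightarrow> real \<Rightarrow> real \<Rightarrow> real" where
  "kernel C N \<tau> \<xi> = C * (lorentz (\<tau> - disp \<xi>) ^ N + lorentz (\<tau> + disp \<xi>) ^ N)"

lemma borel_measurable_kernel [measurable]:
  "(\<lambda>(\<xi>, \<tau>). kernel C N \<tau> \<xi>) \<in> borel_measurable (lborel \<Otimes>\<^sub>M lborel)"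
  "kernel C N \<tau> \<in> borel_measurable lborel"
  unfolding kernel_def by measurable

lemma kernel_nonneg: "0 \<le> C \<Longrightarrow> 0 \<le> kernel C N \<tau> \<xi>"
  unfolding kernel_def using lorentz_pos by (simp add: less_imp_le)

lemma nn_integral_weighted_kernel_le:
  assumes C: "0 \<le> C" and N: "1 + \<bar>r\<bar> \<le> real N"
  shows "(\<integral>\<^sup>+\<tau>. ennreal ((1 + \<tau>\<^sup>2) powr r * kernel C N \<tau> \<xi>) \<partial>lborel)
     \<le> ennreal (2 * pi * C * 2 powr \<bar>r\<bar> * (1 + (disp \<xi>)\<^sup>2) powr r)"
proof -
  define w where "w = disp \<xi>"
  define c where "c = C * 2 powr \<bar>r\<bar> * (1 + w\<^sup>2) powr r"
  have "0 \<le> c"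
    unfolding c_def using C by simp
  have "(1 + \<tau>\<^sup>2) powr r * kernel C N \<tau> \<xi> \<le> c * lorentz (\<tau> - w) + c * lorentz (\<tau> - (- w))" for \<tau>
  proof -
    have "(1 + \<tau>\<^sup>2) powr r * kernel C N \<tau> \<xi>
       = C * ((1 + \<tau>\<^sup>2) powr r * lorentz (\<tau> - w) ^ N) + C * ((1 + \<tau>\<^sup>2) powr r * lorentz (\<tau> - (- w)) ^ N)"
      unfolding kernel_def w_def by (simp add: algebra_simps)
    also have "\<dots> \<le> C * (2 powr \<bar>r\<bar> * (1 + w\<^sup>2) powr r * lorentz (\<tau> - w))
        + C * (2 powr \<bar>r\<bar> * (1 + (- w)\<^sup>2) powr r * lorentz (\<tau> - (- w)))"
      using C by (intro add_mono mult_left_mono peetre_lorentz N)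
    finally show ?thesis
      unfolding c_def by simp
  qed
  then have "(\<integral>\<^sup>+\<tau>. ennreal ((1 + \<tau>\<^sup>2) powr r * kernel C N \<tau> \<xi>) \<partial>lborel)
      \<le> (\<integral>\<^sup>+\<tau>. ennreal c * ennreal (lorentz (\<tau> - w)) + ennreal c * ennreal (lorentz (\<tau> - (- w))) \<partial>lborel)"
    using \<open>0 \<le> c\<close> lorentz_pos
    by (intro nn_integral_mono) (simp add: ennreal_mult[symmetric] ennreal_plus[symmetric] less_imp_le del: ennreal_plus)
  also have "\<dots> = ennreal c * (\<integral>\<^sup>+\<tau>. ennreal (lorentz (\<tau> - w)) \<partial>lborel)
      + ennreal c * (\<integral>\<^sup>+\<tau>. ennreal (lorentz (\<tau> - (- w))) \<partial>lborel)"
    by (simp add: nn_integral_add nn_integral_cmult)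
  also have "\<dots> = ennreal (2 * pi * c)"
    unfolding nn_integral_lorentz_shift using \<open>0 \<le> c\<close>
    by (simp add: ennreal_mult[symmetric] ennreal_plus[symmetric] del: ennreal_plus)
  finally show ?thesis
    unfolding c_def w_def by (simp add: mult_ac)
qed

text \<open>The substitution \<open>\<xi> \<mapsto> disp \<xi>\<close>, whose derivative dominates \<open>bracket \<xi>\<close>, absorbs the weight.\<close>
lemma nn_integral_kernel_bracket_le:
  assumes C: "0 \<le> C" and N: "1 \<le> N"
  shows "(\<integral>\<^sup>+\<xi>. ennreal (kernel C N \<tau> \<xi> * bracket \<xi>) \<partial>lborel) \<le> ennreal (2 * pi * C)"
proof -
  define d where "d \<xi> = bracket \<xi> + \<xi>\<^sup>2 / bracket \<xi>" for \<xi>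
  have d: "bracket \<xi> \<le> d \<xi>" "0 \<le> d \<xi>" for \<xi>
    unfolding d_def using bracket_pos[of \<xi>] by simp_all
  have "kernel C N \<tau> \<xi> * bracket \<xi>
      \<le> C * (lorentz (disp \<xi> - \<tau>) * d \<xi>) + C * (lorentz (disp \<xi> - (- \<tau>)) * d \<xi>)" for \<xi>
  proof -
    have pow: "lorentz y ^ N \<le> lorentz y" for y
      using power_decreasing[of 1 N "lorentz y"] N lorentz_pos[of y] lorentz_le_one[of y] by simp
    have "kernel C N \<tau> \<xi> * bracket \<xi> \<le> C * (lorentz (\<tau> - disp \<xi>) + lorentz (\<tau> + disp \<xi>)) * d \<xi>"
      unfolding kernel_def using C d[of \<xi>] bracket_pos[of \<xi>] lorentz_pos
      by (intro mult_mono mult_left_mono add_mono pow) (auto simp: less_imp_le[OF lorentz_pos])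
    also have "lorentz (\<tau> - disp \<xi>) = lorentz (disp \<xi> - \<tau>)"
      using lorentz_minus[of "disp \<xi> - \<tau>"] by simp
    also have "lorentz (\<tau> + disp \<xi>) = lorentz (disp \<xi> - (- \<tau>))"
      by (simp add: add.commute)
    finally show ?thesis
      by (simp add: algebra_simps)
  qed
  then have "(\<integral>\<^sup>+\<xi>. ennreal (kernel C N \<tau> \<xi> * bracket \<xi>) \<partial>lborel)
      \<le> (\<integral>\<^sup>+\<xi>. ennreal C * ennreal (lorentz (disp \<xi> - \<tau>) * d \<xi>)
          + ennreal C * ennreal (lorentz (disp \<xi> - (- \<tau>)) * d \<xi>) \<partial>lborel)"
    using C lorentz_pos d
    by (intro nn_integral_mono) (simp add: ennreal_mult[symmetric] ennreal_plus[symmetric] less_imp_le del: ennreal_plus)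
  also have "\<dots> = ennreal C * (\<integral>\<^sup>+\<xi>. ennreal (lorentz (disp \<xi> - \<tau>) * d \<xi>) \<partial>lborel)
      + ennreal C * (\<integral>\<^sup>+\<xi>. ennreal (lorentz (disp \<xi> - (- \<tau>)) * d \<xi>) \<partial>lborel)"
    by (simp add: nn_integral_add nn_integral_cmult d_def)
  also have "\<dots> = ennreal (2 * pi * C)"
    unfolding d_def nn_integral_lorentz_disp using C
    by (simp add: ennreal_mult[symmetric] ennreal_plus[symmetric] del: ennreal_plus)
  finally show ?thesis .
qed

lemma nn_integral_weighted_Cauchy_Schwarz:
  assumes [measurable]: "u \<in> borel_measurable M" "K \<in> borel_measurable M" "\<rho> \<in> borel_measurable M"
    and u: "\<And>x. 0 \<le> u x" and K: "\<And>x. 0 \<le> K x" and \<rho>: "\<And>x. 0 < \<rho> x"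
  shows "(\<integral>\<^sup>+x. ennreal (u x * K x) \<partial>M)\<^sup>2
    \<le> (\<integral>\<^sup>+x. ennreal ((u x)\<^sup>2 / \<rho> x * K x) \<partial>M) * (\<integral>\<^sup>+x. ennreal (K x * \<rho> x) \<partial>M)"
proof -
  define f where "f x = ennreal (u x * sqrt (K x / \<rho> x))" for x
  define g where "g x = ennreal (sqrt (K x * \<rho> x))" for x
  have "f x * g x = ennreal (u x * K x)" for x
  proof -
    have "f x * g x = ennreal (u x * sqrt (K x / \<rho> x) * sqrt (K x * \<rho> x))"
      unfolding f_def g_def using u[of x] K[of x] \<rho>[of x] by (intro ennreal_mult[symmetric]) auto
    also have "\<dots> = ennreal (u x * K x)"
      using K[of x] \<rho>[of x] by (simp add: mult.assoc real_sqrt_mult[symmetric])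
    finally show ?thesis .
  qed
  moreover have "f x ^ 2 = ennreal ((u x)\<^sup>2 / \<rho> x * K x)" for x
  proof -
    have "f x ^ 2 = ennreal ((u x * sqrt (K x / \<rho> x)) ^ 2)"
      unfolding f_def using u[of x] K[of x] \<rho>[of x] by (intro ennreal_power) auto
    also have "\<dots> = ennreal ((u x)\<^sup>2 / \<rho> x * K x)"
      using K[of x] \<rho>[of x] by (simp add: power_mult_distrib)
    finally show ?thesis .
  qed
  moreover have "g x ^ 2 = ennreal (K x * \<rho> x)" for x
    unfolding g_def using K[of x] \<rho>[of x] by (subst ennreal_power) auto
  moreover have "(\<integral>\<^sup>+x. f x * g x \<partial>M)\<^sup>2 \<le> (\<integral>\<^sup>+x. f x ^ 2 \<partial>M) * (\<integral>\<^sup>+x. g x ^ 2 \<partial>M)"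
    by (rule Cauchy_Schwarz_nn_integral) (simp_all add: f_def g_def)
  ultimately show ?thesis
    by simp
qed

lemma norm_time_FT_le:
  assumes c: "continuous_on UNIV \<eta>" and supp: "\<And>t. R < \<bar>t\<bar> \<Longrightarrow> \<eta> t = 0"
    and dec: "\<And>\<sigma>. cmod (fourier \<eta> \<sigma>) \<le> C * lorentz \<sigma> ^ N"
  shows "ennreal (cmod (time_FT \<eta> mlt fh gh x \<tau>))
    \<le> ennreal (1 / (2 * pi)) * (\<integral>\<^sup>+\<xi>. ennreal (cmod (mlt \<xi>) * amp fh gh \<xi> * kernel C N \<tau> \<xi>) \<partial>lborel)"
proof -
  define F where "F \<xi> = exp (\<i> * complex_of_real (x * \<xi>)) * mlt \<xi> *
        (\<integral>t. complex_of_real (\<eta> t) * WR_hat fh gh t \<xi> * exp (- \<i> * complex_of_real (t * \<tau>)) \<partial>lborel)" for \<xi>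
  have "cmod (F \<xi>) \<le> cmod (mlt \<xi>) * amp fh gh \<xi> * kernel C N \<tau> \<xi>" for \<xi>
  proof -
    have "cmod (F \<xi>) = cmod (mlt \<xi>) *
        cmod (\<integral>t. complex_of_real (\<eta> t) * WR_hat fh gh t \<xi> * exp (- \<i> * complex_of_real (t * \<tau>)) \<partial>lborel)"
      unfolding F_def by (simp add: norm_mult)
    also have "\<dots> \<le> cmod (mlt \<xi>) * (amp fh gh \<xi> * (cmod (fourier \<eta> (\<tau> - disp \<xi>)) + cmod (fourier \<eta> (\<tau> + disp \<xi>))))"
      by (intro mult_left_mono norm_time_integral_WR_hat_le[OF c supp]) simp_all
    also have "\<dots> \<le> cmod (mlt \<xi>) * (amp fh gh \<xi> * kernel C N \<tau> \<xi>)"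
      unfolding kernel_def using amp_nonneg
      by (intro mult_left_mono) (auto intro!: add_mono dec simp: distrib_left)
    finally show ?thesis
      by (simp add: mult_ac)
  qed
  then have bound: "(\<integral>\<^sup>+\<xi>. ennreal (cmod (F \<xi>)) \<partial>lborel)
      \<le> (\<integral>\<^sup>+\<xi>. ennreal (cmod (mlt \<xi>) * amp fh gh \<xi> * kernel C N \<tau> \<xi>) \<partial>lborel)"
    by (intro nn_integral_mono ennreal_leI)
  have "ennreal (cmod (time_FT \<eta> mlt fh gh x \<tau>)) = ennreal (1 / (2 * pi)) * ennreal (cmod (integral\<^sup>L lborel F))"
    unfolding time_FT_def F_def[symmetric] norm_mult norm_of_real by (simp add: ennreal_mult[symmetric])
  also have "\<dots> \<le> ennreal (1 / (2 * pi)) * (\<integral>\<^sup>+\<xi>. ennreal (cmod (F \<xi>)) \<partial>lborel)"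
    by (intro mult_left_mono; cases "integrable lborel F")
      (simp_all add: integral_norm_bound_ennreal not_integrable_integral_eq)
  also have "\<dots> \<le> ennreal (1 / (2 * pi)) * (\<integral>\<^sup>+\<xi>. ennreal (cmod (mlt \<xi>) * amp fh gh \<xi> * kernel C N \<tau> \<xi>) \<partial>lborel)"
    by (intro mult_left_mono bound) simp
  finally show ?thesis .
qed

lemma norm_time_FT_sq_le:
  assumes c: "continuous_on UNIV \<eta>" and supp: "\<And>t. R < \<bar>t\<bar> \<Longrightarrow> \<eta> t = 0"
    and dec: "\<And>\<sigma>. cmod (fourier \<eta> \<sigma>) \<le> C * lorentz \<sigma> ^ N" and C: "0 \<le> C" and N: "1 \<le> N"
    and [measurable]: "fh \<in> borel_measurable lborel" "gh \<in> borel_measurable lborel" "mlt \<in> borel_measurable lborel"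
  shows "ennreal ((cmod (time_FT \<eta> mlt fh gh x \<tau>))\<^sup>2)
    \<le> ennreal (C / (2 * pi)) * (\<integral>\<^sup>+\<xi>. ennreal ((cmod (mlt \<xi>) * amp fh gh \<xi>)\<^sup>2 / bracket \<xi> * kernel C N \<tau> \<xi>) \<partial>lborel)"
proof -
  define S where "S = (\<integral>\<^sup>+\<xi>. ennreal (cmod (mlt \<xi>) * amp fh gh \<xi> * kernel C N \<tau> \<xi>) \<partial>lborel)"
  define P where "P = (\<integral>\<^sup>+\<xi>. ennreal ((cmod (mlt \<xi>) * amp fh gh \<xi>)\<^sup>2 / bracket \<xi> * kernel C N \<tau> \<xi>) \<partial>lborel)"
  have u: "(\<lambda>\<xi>. cmod (mlt \<xi>) * amp fh gh \<xi>) \<in> borel_measurable lborel"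
    by measurable
  have "S\<^sup>2 \<le> P * (\<integral>\<^sup>+\<xi>. ennreal (kernel C N \<tau> \<xi> * bracket \<xi>) \<partial>lborel)"
    unfolding S_def P_def
    by (rule nn_integral_weighted_Cauchy_Schwarz[OF u borel_measurable_kernel(2)])
      (simp_all add: bracket_pos amp_nonneg kernel_nonneg[OF C])
  also have "\<dots> \<le> P * ennreal (2 * pi * C)"
    by (intro mult_left_mono nn_integral_kernel_bracket_le C N) simp
  finally have S: "S\<^sup>2 \<le> P * ennreal (2 * pi * C)" .
  have "ennreal ((cmod (time_FT \<eta> mlt fh gh x \<tau>))\<^sup>2) = (ennreal (cmod (time_FT \<eta> mlt fh gh x \<tau>)))\<^sup>2"
    by (simp add: ennreal_power)
  also have "\<dots> \<le> (ennreal (1 / (2 * pi)) * S)\<^sup>2"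
    unfolding S_def by (intro power_mono norm_time_FT_le[OF c supp dec]) simp_all
  also have "\<dots> \<le> (ennreal (1 / (2 * pi)))\<^sup>2 * (P * ennreal (2 * pi * C))"
    unfolding power_mult_distrib by (intro mult_left_mono S) simp
  also have "\<dots> = ennreal ((1 / (2 * pi))\<^sup>2 * (2 * pi * C)) * P"
    using C by (simp add: ennreal_power ennreal_mult mult_ac)
  also have "(1 / (2 * pi))\<^sup>2 * (2 * pi * C) = C / (2 * pi)"
    by (simp add: power2_eq_square field_simps)
  finally show ?thesis
    unfolding P_def by (simp add: mult_ac)
qed

lemma nn_integral_weighted_kernel_double_le:
  assumes C: "0 \<le> C" and N: "1 + \<bar>r\<bar> \<le> real N" and [measurable]: "W \<in> borel_measurable lborel"
  shows "(\<integral>\<^sup>+\<tau>. (\<integral>\<^sup>+\<xi>. ennreal (W \<xi>) * ennreal ((1 + \<tau>\<^sup>2) powr r * kernel C N \<tau> \<xi>) \<partial>lborel) \<partial>lborel)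
    \<le> ennreal (2 * pi * C * 2 powr \<bar>r\<bar>) * (\<integral>\<^sup>+\<xi>. ennreal (W \<xi> * (1 + (disp \<xi>)\<^sup>2) powr r) \<partial>lborel)"
proof -
  have "(\<integral>\<^sup>+\<tau>. (\<integral>\<^sup>+\<xi>. ennreal (W \<xi>) * ennreal ((1 + \<tau>\<^sup>2) powr r * kernel C N \<tau> \<xi>) \<partial>lborel) \<partial>lborel)
      = (\<integral>\<^sup>+\<xi>. ennreal (W \<xi>) * (\<integral>\<^sup>+\<tau>. ennreal ((1 + \<tau>\<^sup>2) powr r * kernel C N \<tau> \<xi>) \<partial>lborel) \<partial>lborel)"
    by (subst lborel_pair.Fubini') (simp_all add: nn_integral_cmult)
  also have "\<dots> \<le> (\<integral>\<^sup>+\<xi>. ennreal (W \<xi>) * ennreal (2 * pi * C * 2 powr \<bar>r\<bar> * (1 + (disp \<xi>)\<^sup>2) powr r) \<partial>lborel)"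
    by (intro nn_integral_mono mult_left_mono nn_integral_weighted_kernel_le C N) simp
  also have "\<dots> = (\<integral>\<^sup>+\<xi>. ennreal (2 * pi * C * 2 powr \<bar>r\<bar>) * ennreal (W \<xi> * (1 + (disp \<xi>)\<^sup>2) powr r) \<partial>lborel)"
    by (intro nn_integral_cong) (simp add: ennreal_mult'' mult_ac)
  also have "\<dots> = ennreal (2 * pi * C * 2 powr \<bar>r\<bar>) * (\<integral>\<^sup>+\<xi>. ennreal (W \<xi> * (1 + (disp \<xi>)\<^sup>2) powr r) \<partial>lborel)"
    by (rule nn_integral_cmult) measurable
  finally show ?thesis .
qed

lemma time_Hs_sq_le:
  assumes c: "continuous_on UNIV \<eta>" and supp: "\<And>t. R < \<bar>t\<bar> \<Longrightarrow> \<eta> t = 0"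
    and dec: "\<And>\<sigma>. cmod (fourier \<eta> \<sigma>) \<le> C * lorentz \<sigma> ^ N" and C: "0 \<le> C"
    and N: "1 + \<bar>r\<bar> \<le> real N"
    and [measurable]: "fh \<in> borel_measurable lborel" "gh \<in> borel_measurable lborel" "mlt \<in> borel_measurable lborel"
  shows "time_Hs_sq r \<eta> mlt fh gh x \<le> ennreal (C\<^sup>2 * 2 powr \<bar>r\<bar>) *
    (\<integral>\<^sup>+\<xi>. ennreal ((cmod (mlt \<xi>) * amp fh gh \<xi>)\<^sup>2 / bracket \<xi> * (1 + (disp \<xi>)\<^sup>2) powr r) \<partial>lborel)"
proof -
  define W where "W \<xi> = (cmod (mlt \<xi>) * amp fh gh \<xi>)\<^sup>2 / bracket \<xi>" for \<xi>
  have [measurable]: "W \<in> borel_measurable lborel"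
    unfolding W_def by measurable
  have "1 \<le> N"
    using N by (smt (verit) abs_ge_zero of_nat_le_iff of_nat_1)
  have "ennreal ((1 + \<tau>\<^sup>2) powr r * (cmod (time_FT \<eta> mlt fh gh x \<tau>))\<^sup>2)
      \<le> ennreal (C / (2 * pi)) *
        (\<integral>\<^sup>+\<xi>. ennreal (W \<xi>) * ennreal ((1 + \<tau>\<^sup>2) powr r * kernel C N \<tau> \<xi>) \<partial>lborel)" for \<tau>
  proof -
    have "ennreal ((1 + \<tau>\<^sup>2) powr r * (cmod (time_FT \<eta> mlt fh gh x \<tau>))\<^sup>2)
        \<le> ennreal ((1 + \<tau>\<^sup>2) powr r) * (ennreal (C / (2 * pi)) * (\<integral>\<^sup>+\<xi>. ennreal (W \<xi> * kernel C N \<tau> \<xi>) \<partial>lborel))"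
      unfolding ennreal_mult'[OF powr_ge_zero] W_def
      by (intro mult_left_mono norm_time_FT_sq_le[OF c supp dec C \<open>1 \<le> N\<close>]) simp_all
    also have "\<dots> = ennreal (C / (2 * pi)) *
        (\<integral>\<^sup>+\<xi>. ennreal (W \<xi>) * ennreal ((1 + \<tau>\<^sup>2) powr r * kernel C N \<tau> \<xi>) \<partial>lborel)"
      using kernel_nonneg[OF C]
      by (simp add: mult.left_commute nn_integral_cmult[symmetric] ennreal_mult'' mult_ac)
    finally show ?thesis .
  qed
  then have "time_Hs_sq r \<eta> mlt fh gh x \<le> ennreal (C / (2 * pi)) *
      (\<integral>\<^sup>+\<tau>. (\<integral>\<^sup>+\<xi>. ennreal (W \<xi>) * ennreal ((1 + \<tau>\<^sup>2) powr r * kernel C N \<tau> \<xi>) \<partial>lborel) \<partial>lborel)"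
    unfolding time_Hs_sq_def by (subst nn_integral_cmult[symmetric]) (measurable, intro nn_integral_mono)
  also have "\<dots> \<le> ennreal (C / (2 * pi)) * (ennreal (2 * pi * C * 2 powr \<bar>r\<bar>) *
      (\<integral>\<^sup>+\<xi>. ennreal (W \<xi> * (1 + (disp \<xi>)\<^sup>2) powr r) \<partial>lborel))"
    by (intro mult_left_mono nn_integral_weighted_kernel_double_le C N) simp_all
  also have "\<dots> = ennreal (C\<^sup>2 * 2 powr \<bar>r\<bar>) * (\<integral>\<^sup>+\<xi>. ennreal (W \<xi> * (1 + (disp \<xi>)\<^sup>2) powr r) \<partial>lborel)"
    using C by (simp add: mult.assoc[symmetric] ennreal_mult[symmetric] power2_eq_square)
  finally show ?thesis
    unfolding W_def .
qed

section \<open>Sobolev weights\<close>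

lemma disp_weight_le: "(1 + (disp \<xi>)\<^sup>2) powr r \<le> 2 powr \<bar>r\<bar> * (1 + \<xi>\<^sup>2) powr (2 * r)"
proof -
  define L where "L = 1 + \<xi>\<^sup>2"
  define W where "W = 1 + (disp \<xi>)\<^sup>2"
  have L: "1 \<le> L"
    unfolding L_def by simp
  have W_eq: "W = 1 + \<xi>\<^sup>2 + \<xi>\<^sup>2 * \<xi>\<^sup>2"
    unfolding W_def disp_def power_mult_distrib bracket_sq by (simp add: algebra_simps)
  have L_sq: "L\<^sup>2 = 1 + 2 * \<xi>\<^sup>2 + \<xi>\<^sup>2 * \<xi>\<^sup>2"
    unfolding L_def by (simp add: power2_eq_square algebra_simps)
  have W: "1 \<le> W" "W \<le> L\<^sup>2" "L\<^sup>2 / 2 \<le> W"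
    unfolding W_eq L_sq by simp_all
  have L_powr: "(L\<^sup>2) powr r = L powr (2 * r)"
    using L by (simp add: powr_powr[symmetric] powr_numeral)
  show ?thesis
  proof (cases "0 \<le> r")
    case True
    have "W powr r \<le> (L\<^sup>2) powr r"
      using True W by (intro powr_mono2) auto
    also have "\<dots> \<le> 2 powr \<bar>r\<bar> * (L\<^sup>2) powr r"
      using mult_right_mono[of 1 "2 powr \<bar>r\<bar>" "(L\<^sup>2) powr r"] by (simp add: ge_one_powr_ge_zero)
    finally show ?thesis
      unfolding L_powr unfolding W_def L_def .
  next
    case False
    have "W powr r \<le> (L\<^sup>2 / 2) powr r"
      using False W L by (intro powr_mono2') auto
    also have "\<dots> = 2 powr \<bar>r\<bar> * (L\<^sup>2) powr r"
      using False by (simp add: powr_divide powr_minus_divide)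
    finally show ?thesis
      unfolding L_powr unfolding W_def L_def .
  qed
qed

lemma multiplier_weight_le:
  assumes m: "0 \<le> m" "m \<le> (1 + \<xi>\<^sup>2) powr e" and rs: "2 * r + e - 1/2 = s"
  shows "m / bracket \<xi> * (1 + (disp \<xi>)\<^sup>2) powr r \<le> 2 powr \<bar>r\<bar> * (1 + \<xi>\<^sup>2) powr s"
proof -
  define L where "L = 1 + \<xi>\<^sup>2"
  have L: "1 \<le> L"
    unfolding L_def by simp
  have bracket: "bracket \<xi> = L powr (1/2)"
    unfolding bracket_def L_def by (simp add: powr_half_sqrt add_nonneg_nonneg)
  have "m * (1 + (disp \<xi>)\<^sup>2) powr r \<le> L powr e * (2 powr \<bar>r\<bar> * L powr (2 * r))"
    unfolding L_def using m by (intro mult_mono disp_weight_le) auto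
  also have "\<dots> = 2 powr \<bar>r\<bar> * L powr s * bracket \<xi>"
    using L unfolding bracket rs[symmetric] by (simp add: powr_add[symmetric] ac_simps)
  finally show ?thesis
    using bracket_pos[of \<xi>] unfolding L_def by (simp add: divide_le_eq mult_ac)
qed

lemma amp_sq_le: "(amp fh gh \<xi>)\<^sup>2 \<le> 2 * (cmod (fh \<xi>))\<^sup>2 + 2 * ((cmod (gh \<xi>))\<^sup>2 / (1 + \<xi>\<^sup>2))"
proof -
  have "(amp fh gh \<xi>)\<^sup>2 \<le> 2 * (cmod (fh \<xi>))\<^sup>2 + 2 * (cmod (gh \<xi>) / bracket \<xi>)\<^sup>2"
    unfolding amp_def by (smt (verit) power2_diff power2_sum zero_le_power2)
  then show ?thesis
    by (simp add: power_divide bracket_sq)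
qed

lemma nn_integral_amp_le:
  assumes wgt: "\<And>\<xi>. (cmod (mlt \<xi>))\<^sup>2 / bracket \<xi> * (1 + (disp \<xi>)\<^sup>2) powr r \<le> c * (1 + \<xi>\<^sup>2) powr s"
    and c: "0 \<le> c"
    and [measurable]: "fh \<in> borel_measurable lborel" "gh \<in> borel_measurable lborel"
  shows "(\<integral>\<^sup>+\<xi>. ennreal ((cmod (mlt \<xi>) * amp fh gh \<xi>)\<^sup>2 / bracket \<xi> * (1 + (disp \<xi>)\<^sup>2) powr r) \<partial>lborel)
     \<le> ennreal (2 * c) * (Hs_sq s fh + Hs_sq (s - 1) gh)"
proof -
  have "(cmod (mlt \<xi>) * amp fh gh \<xi>)\<^sup>2 / bracket \<xi> * (1 + (disp \<xi>)\<^sup>2) powr r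
     \<le> 2 * c * ((1 + \<xi>\<^sup>2) powr s * (cmod (fh \<xi>))\<^sup>2) + 2 * c * ((1 + \<xi>\<^sup>2) powr (s - 1) * (cmod (gh \<xi>))\<^sup>2)" for \<xi>
  proof -
    define L where "L = 1 + \<xi>\<^sup>2"
    have L: "1 \<le> L"
      unfolding L_def by simp
    have "(cmod (mlt \<xi>) * amp fh gh \<xi>)\<^sup>2 / bracket \<xi> * (1 + (disp \<xi>)\<^sup>2) powr r
        = ((cmod (mlt \<xi>))\<^sup>2 / bracket \<xi> * (1 + (disp \<xi>)\<^sup>2) powr r) * (amp fh gh \<xi>)\<^sup>2"
      by (simp add: power_mult_distrib)
    also have "\<dots> \<le> (c * L powr s) * (2 * (cmod (fh \<xi>))\<^sup>2 + 2 * ((cmod (gh \<xi>))\<^sup>2 / L))"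
      unfolding L_def using c by (intro mult_mono wgt amp_sq_le) auto
    also have "\<dots> = 2 * c * (L powr s * (cmod (fh \<xi>))\<^sup>2) + 2 * c * (L powr s / L * (cmod (gh \<xi>))\<^sup>2)"
      by (simp add: algebra_simps)
    also have "L powr s / L = L powr (s - 1)"
      using L by (simp add: powr_diff)
    finally show ?thesis
      unfolding L_def .
  qed
  then have "(\<integral>\<^sup>+\<xi>. ennreal ((cmod (mlt \<xi>) * amp fh gh \<xi>)\<^sup>2 / bracket \<xi> * (1 + (disp \<xi>)\<^sup>2) powr r) \<partial>lborel)
     \<le> (\<integral>\<^sup>+\<xi>. ennreal (2 * c) * ennreal ((1 + \<xi>\<^sup>2) powr s * (cmod (fh \<xi>))\<^sup>2)
          + ennreal (2 * c) * ennreal ((1 + \<xi>\<^sup>2) powr (s - 1) * (cmod (gh \<xi>))\<^sup>2) \<partial>lborel)"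
    using c by (intro nn_integral_mono) (simp add: ennreal_mult[symmetric] ennreal_plus[symmetric] del: ennreal_plus)
  also have "\<dots> = ennreal (2 * c) * (Hs_sq s fh + Hs_sq (s - 1) gh)"
    unfolding Hs_sq_def by (simp add: nn_integral_add nn_integral_cmult distrib_left)
  finally show ?thesis .
qed

lemma Hs_sq_add_le:
  assumes "in_Hs s fh" "in_Hs s' gh"
  shows "Hs_sq s fh + Hs_sq s' gh \<le> ennreal ((Hs_norm s fh + Hs_norm s' gh)\<^sup>2)"
proof -
  have "Hs_sq s fh = ennreal ((Hs_norm s fh)\<^sup>2)" "Hs_sq s' gh = ennreal ((Hs_norm s' gh)\<^sup>2)"
    using assms unfolding in_Hs_def Hs_norm_def by (simp_all add: ennreal_enn2real less_top[symmetric])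
  moreover have "0 \<le> Hs_norm s fh" "0 \<le> Hs_norm s' gh"
    unfolding Hs_norm_def by simp_all
  ultimately show ?thesis
    by (simp add: power2_sum del: ennreal_plus add: ennreal_plus[symmetric])
qed

lemma time_Hs_sq_le_Hs_norms:
  assumes c: "continuous_on UNIV \<eta>" and supp: "\<And>t. R < \<bar>t\<bar> \<Longrightarrow> \<eta> t = 0"
    and dec: "\<And>\<sigma>. cmod (fourier \<eta> \<sigma>) \<le> C * lorentz \<sigma> ^ N" and C: "0 \<le> C"
    and N: "1 + \<bar>r\<bar> \<le> real N"
    and mlt: "mlt \<in> borel_measurable lborel" "\<And>\<xi>. (cmod (mlt \<xi>))\<^sup>2 \<le> (1 + \<xi>\<^sup>2) powr e"
    and rs: "2 * r + e - 1/2 = s"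
    and fh: "in_Hs s fh" and gh: "in_Hs (s - 1) gh"
  shows "time_Hs_sq r \<eta> mlt fh gh x
    \<le> ennreal (2 * 4 powr \<bar>r\<bar> * C\<^sup>2 * (Hs_norm s fh + Hs_norm (s - 1) gh)\<^sup>2)"
proof -
  have fh_meas [measurable]: "fh \<in> borel_measurable lborel" and gh_meas [measurable]: "gh \<in> borel_measurable lborel"
    using fh gh unfolding in_Hs_def by simp_all
  have "time_Hs_sq r \<eta> mlt fh gh x \<le> ennreal (C\<^sup>2 * 2 powr \<bar>r\<bar>) *
      (\<integral>\<^sup>+\<xi>. ennreal ((cmod (mlt \<xi>) * amp fh gh \<xi>)\<^sup>2 / bracket \<xi> * (1 + (disp \<xi>)\<^sup>2) powr r) \<partial>lborel)"
    by (rule time_Hs_sq_le[OF c supp dec C N fh_meas gh_meas mlt(1)])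
  also have "\<dots> \<le> ennreal (C\<^sup>2 * 2 powr \<bar>r\<bar>) * (ennreal (2 * 2 powr \<bar>r\<bar>) * (Hs_sq s fh + Hs_sq (s - 1) gh))"
    by (intro mult_left_mono nn_integral_amp_le multiplier_weight_le[OF _ mlt(2) rs]) simp_all
  also have "\<dots> \<le> ennreal (C\<^sup>2 * 2 powr \<bar>r\<bar>) * (ennreal (2 * 2 powr \<bar>r\<bar>) * ennreal ((Hs_norm s fh + Hs_norm (s - 1) gh)\<^sup>2))"
    by (intro mult_left_mono Hs_sq_add_le fh gh) simp_all
  also have "\<dots> = ennreal (2 * 4 powr \<bar>r\<bar> * C\<^sup>2 * (Hs_norm s fh + Hs_norm (s - 1) gh)\<^sup>2)"
    by (simp add: ennreal_mult[symmetric] powr_mult[symmetric] mult_ac)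
  finally show ?thesis .
qed

lemma two_mul_four_powr_le:
  fixes r s :: real
  assumes "\<bar>r\<bar> \<le> \<bar>s\<bar> + 1"
  shows "2 * 4 powr \<bar>r\<bar> \<le> (2 powr (\<bar>s\<bar> + 2))\<^sup>2"
proof -
  have "2 * 4 powr \<bar>r\<bar> \<le> (4::real) powr (\<bar>r\<bar> + 1)"
    by (simp add: powr_add)
  also have "\<dots> \<le> 4 powr (\<bar>s\<bar> + 2)"
    using assms by (intro powr_mono) auto
  also have "\<dots> = (2 powr (\<bar>s\<bar> + 2))\<^sup>2"
    by (simp add: power2_eq_square powr_mult[symmetric])
  finally show ?thesis .
qed

lemma cutoff_time_Hs_sq_le:
  assumes "is_cutoff \<eta>"
  obtains C where "\<And>r e mlt fh gh x. in_Hs s fh \<Longrightarrow> in_Hs (s - 1) gh \<Longrightarrow> mlt \<in> borel_measurable lborel \<Longrightarrow>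
      (\<And>\<xi>. (cmod (mlt \<xi>))\<^sup>2 \<le> (1 + \<xi>\<^sup>2) powr e) \<Longrightarrow> 2 * r + e - 1/2 = s \<Longrightarrow> \<bar>r\<bar> \<le> \<bar>s\<bar> + 1 \<Longrightarrow>
      time_Hs_sq r \<eta> mlt fh gh x \<le> ennreal ((C * (Hs_norm s fh + Hs_norm (s - 1) gh))\<^sup>2)"
proof -
  have smooth: "smooth_real \<eta>" and supp: "\<And>t. 2 < \<bar>t\<bar> \<Longrightarrow> \<eta> t = 0"
    using assms unfolding is_cutoff_def by force+
  have cont: "continuous_on UNIV \<eta>"
    using smooth_real_continuous_iterated_deriv[OF smooth, of 0] by simp
  define N where "N = nat \<lceil>\<bar>s\<bar>\<rceil> + 2"
  obtain C where C: "0 \<le> C" and dec: "\<And>\<sigma>. cmod (fourier \<eta> \<sigma>) \<le> C * lorentz \<sigma> ^ N"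
    using fourier_rapid_decay[where N = N, OF smooth supp] by blast
  have "time_Hs_sq r \<eta> mlt fh gh x \<le> ennreal ((C * 2 powr (\<bar>s\<bar> + 2) * (Hs_norm s fh + Hs_norm (s - 1) gh))\<^sup>2)"
    if "in_Hs s fh" "in_Hs (s - 1) gh" "mlt \<in> borel_measurable lborel"
      "\<And>\<xi>. (cmod (mlt \<xi>))\<^sup>2 \<le> (1 + \<xi>\<^sup>2) powr e" "2 * r + e - 1/2 = s" "\<bar>r\<bar> \<le> \<bar>s\<bar> + 1"
    for r e mlt fh gh x
  proof -
    have "1 + \<bar>r\<bar> \<le> real N"
      using that(6) by (simp add: N_def) (use le_of_int_ceiling[of "\<bar>s\<bar>"] in linarith)
    from time_Hs_sq_le_Hs_norms[OF cont supp dec C this that(3-5,1,2)]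
    have "time_Hs_sq r \<eta> mlt fh gh x
        \<le> ennreal (2 * 4 powr \<bar>r\<bar> * (C\<^sup>2 * (Hs_norm s fh + Hs_norm (s - 1) gh)\<^sup>2))"
      by (simp add: mult.assoc)
    also have "\<dots> \<le> ennreal ((2 powr (\<bar>s\<bar> + 2))\<^sup>2 * (C\<^sup>2 * (Hs_norm s fh + Hs_norm (s - 1) gh)\<^sup>2))"
      by (intro ennreal_leI mult_right_mono two_mul_four_powr_le that(6)) simp
    finally show ?thesis
      by (simp add: power_mult_distrib mult_ac)
  qed
  then show thesis
    by (rule that)
qed

theorem lemma4p1:
  fixes \<eta> :: "real \<Rightarrow> real" and s :: real
  assumes "is_cutoff \<eta>"
  shows "\<exists>C. \<forall>fh gh. in_Hs s fh \<longrightarrow> in_Hs (s - 1) gh \<longrightarrow>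
      (AE x in lborel. time_Hs_sq ((2 * s + 1) / 4) \<eta> (\<lambda>_. 1) fh gh x
          \<le> ennreal ((C * (Hs_norm s fh + Hs_norm (s - 1) gh))\<^sup>2)) \<and>
      (AE x in lborel. time_Hs_sq ((2 * s - 1) / 4) \<eta> (\<lambda>\<xi>. \<i> * complex_of_real \<xi>) fh gh x
          \<le> ennreal ((C * (Hs_norm s fh + Hs_norm (s - 1) gh))\<^sup>2))"
proof -
  obtain C where bound: "\<And>r e mlt fh gh x. in_Hs s fh \<Longrightarrow> in_Hs (s - 1) gh \<Longrightarrow> mlt \<in> borel_measurable lborel \<Longrightarrow>
      (\<And>\<xi>. (cmod (mlt \<xi>))\<^sup>2 \<le> (1 + \<xi>\<^sup>2) powr e) \<Longrightarrow> 2 * r + e - 1/2 = s \<Longrightarrow> \<bar>r\<bar> \<le> \<bar>s\<bar> + 1 \<Longrightarrow>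
      time_Hs_sq r \<eta> mlt fh gh x \<le> ennreal ((C * (Hs_norm s fh + Hs_norm (s - 1) gh))\<^sup>2)"
    using cutoff_time_Hs_sq_le[OF assms] by blast
  have r_plus: "2 * ((2 * s + 1) / 4) + 0 - 1/2 = s" "\<bar>(2 * s + 1) / 4\<bar> \<le> \<bar>s\<bar> + 1"
    and r_minus: "2 * ((2 * s - 1) / 4) + 1 - 1/2 = s" "\<bar>(2 * s - 1) / 4\<bar> \<le> \<bar>s\<bar> + 1"
    by (simp_all add: field_simps abs_le_iff)
  have "(\<lambda>\<xi>. \<i> * complex_of_real \<xi>) \<in> borel_measurable lborel"
    by measurable
  with r_plus r_minus show ?thesis
    by (intro exI[of _ C] allI impI conjI AE_I2 bound[where e = 0] bound[where e = 1])
      (simp_all add: norm_mult add_pos_nonneg add_nonneg_eq_0_iff)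
qed

end
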